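(* There is an interpretation of $L(I)$ in $W(I)$, for which the co-ordinate map from the set of finite unions of closed intervals of $I$ to (finite subsets of $I$)$^2$ is given by $A \mapsto (l(A),r(A))$, the pair consisting of the set of left endpoints and the set of right endpoints of $A$.
   Context: Let $I$ be a dense linear order with a left endpoint $0$ and no right endpoint. $W(I)$ is the structure in the signature $\{\cup,\cap,\bot,\{0\},\min,\max,\mathrm{ips}\}$ whose universe is the collection of finite subsets of $I$, with $\cup,\cap$ union and intersection, $\bot$ the empty set, the constant $\{0\}$ interpreted as the singleton of the left endpoint, $\min$ and $\max$ sending a nonempty finite set to the singleton of its minimum (resp. maximum) and fixing $\emptyset$, and $\mathrm{ips}$ the binary function $\mathrm{ips}(A,B)=\{i\in A : \text{the successor of } i \text{ in } A \text{ (in the induced order) exists and lies in } B\}$. $L(I)$ is the structure in the signature $\{\cup,\cap,\bot,\{0\},\min,\max,l,r\}$ whose universe is the collection of finite unions of closed intervals of $I$ (closed intervals being sets of the form $[i,j]$, $[i,+\infty)$, $(-\infty,j]$), with $\cup,\cap$ union and intersection, $\bot$ the empty set, $\{0\}$ the singleton of the left endpoint, $\min$ and $\max$ sending a set to the singleton of its minimum (resp. maximum), with $\min(\emptyset)=\max(\emptyset)=\emptyset$ and $\max(A)=\emptyset$ for unbounded $A$, and $l$, $r$ sending a set to the set of its left (resp. right) endpoints. *)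

theory Defs
  imports Main
begin

text \<open>The dense linear order I with left endpoint 0 and no right endpoint is modelled
by a type of class dense_linorder, order_bot, no_top; the left endpoint 0 is bot.\<close>

definition ips :: "'a::linorder set \<Rightarrow> 'a set \<Rightarrow> 'a set" where
  "ips A B = {i \<in> A. \<exists>j\<in>A. i < j \<and> (\<forall>k\<in>A. i < k \<longrightarrow> j \<le> k) \<and> j \<in> B}"

definition Wmin :: "'a::linorder set \<Rightarrow> 'a set" where
  "Wmin S = (if S = {} then {} else {Min S})"

definition Wmax :: "'a::linorder set \<Rightarrow> 'a set" where
  "Wmax S = (if S = {} then {} else {Max S})"

datatype wterm = WVar nat | WUn wterm wterm | WInt wterm wterm | WBot | WZero
  | WMin wterm | WMax wterm | WIps wterm wterm

datatype wform = WEq wterm wterm | WNeg wform | WConj wform wform | WEx nat wform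

fun weval :: "(nat \<Rightarrow> 'a::{linorder,order_bot} set) \<Rightarrow> wterm \<Rightarrow> 'a set" where
  "weval \<sigma> (WVar n) = \<sigma> n"
| "weval \<sigma> (WUn s t) = weval \<sigma> s \<union> weval \<sigma> t"
| "weval \<sigma> (WInt s t) = weval \<sigma> s \<inter> weval \<sigma> t"
| "weval \<sigma> WBot = {}"
| "weval \<sigma> WZero = {bot}"
| "weval \<sigma> (WMin t) = Wmin (weval \<sigma> t)"
| "weval \<sigma> (WMax t) = Wmax (weval \<sigma> t)"
| "weval \<sigma> (WIps s t) = ips (weval \<sigma> s) (weval \<sigma> t)"

text \<open>Satisfaction in W(I): quantifiers range over the universe, the finite subsets.\<close>
fun wsat :: "(nat \<Rightarrow> 'a::{linorder,order_bot} set) \<Rightarrow> wform \<Rightarrow> bool" where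
  "wsat \<sigma> (WEq s t) = (weval \<sigma> s = weval \<sigma> t)"
| "wsat \<sigma> (WNeg \<phi>) = (\<not> wsat \<sigma> \<phi>)"
| "wsat \<sigma> (WConj \<phi> \<psi>) = (wsat \<sigma> \<phi> \<and> wsat \<sigma> \<psi>)"
| "wsat \<sigma> (WEx n \<phi>) = (\<exists>X. finite X \<and> wsat (\<sigma>(n := X)) \<phi>)"

text \<open>A relation R on W(I) of arity n (tuples as lists) is (parameter-free) definable
if some formula with free variables among 0..n-1 defines it.\<close>
definition W_definable :: "nat \<Rightarrow> 'a::{linorder,order_bot} set list set \<Rightarrow> bool" where
  "W_definable n R \<longleftrightarrow>
     R \<subseteq> {xs. length xs = n \<and> (\<forall>X\<in>set xs. finite X)} \<and>
     (\<exists>\<phi>. \<forall>\<sigma>. (\<forall>i. finite (\<sigma> i)) \<longrightarrow> (wsat \<sigma> \<phi> \<longleftrightarrow> map \<sigma> [0..<n] \<in> R))"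

definition closed_interval :: "'a::linorder set \<Rightarrow> bool" where
  "closed_interval S \<longleftrightarrow> (\<exists>i j. S = {i..j}) \<or> (\<exists>i. S = {i..}) \<or> (\<exists>j. S = {..j})"

definition Lset :: "'a::linorder set \<Rightarrow> bool" where
  "Lset A \<longleftrightarrow> (\<exists>F. finite F \<and> (\<forall>S\<in>F. closed_interval S) \<and> A = \<Union>F)"

text \<open>Left / right endpoints (of the connected components) of a set.\<close>
definition lend :: "'a::{linorder,order_bot} set \<Rightarrow> 'a set" where
  "lend A = {i \<in> A. i = bot \<or> (\<exists>j<i. {j<..<i} \<inter> A = {})}"

definition rend :: "'a::linorder set \<Rightarrow> 'a set" where
  "rend A = {i \<in> A. \<exists>j>i. {i<..<j} \<inter> A = {}}"

definition Lmin :: "'a::linorder set \<Rightarrow> 'a set" where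
  "Lmin A = (if A = {} then {} else {LEAST x. x \<in> A})"

definition Lmax :: "'a::linorder set \<Rightarrow> 'a set" where
  "Lmax A = (if A = {} \<or> \<not> bdd_above A then {} else {GREATEST x. x \<in> A})"

text \<open>c A is the tuple of co-ordinates (in W(I)) of the element A of L(I). The domain,
the pull-back of equality, and the graphs of all operations of L(I) must be
parameter-free definable in W(I).\<close>
definition interprets_L_in_W :: "('a::{linorder,order_bot} set \<Rightarrow> 'a set list) \<Rightarrow> nat \<Rightarrow> bool" where
  "interprets_L_in_W c k \<longleftrightarrow>
     (\<forall>A. Lset A \<longrightarrow> length (c A) = k) \<and>
     W_definable k {c A | A. Lset A} \<and>
     W_definable (2*k) {c A @ c B | A B. Lset A \<and> Lset B \<and> A = B} \<and>
     W_definable (3*k) {c A @ c B @ c (A \<union> B) | A B. Lset A \<and> Lset B} \<and>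
     W_definable (3*k) {c A @ c B @ c (A \<inter> B) | A B. Lset A \<and> Lset B} \<and>
     W_definable k {c {}} \<and>
     W_definable k {c {bot}} \<and>
     W_definable (2*k) {c A @ c (Lmin A) | A. Lset A} \<and>
     W_definable (2*k) {c A @ c (Lmax A) | A. Lset A} \<and>
     W_definable (2*k) {c A @ c (lend A) | A. Lset A} \<and>
     W_definable (2*k) {c A @ c (rend A) | A. Lset A}"

end

theory Submission
  imports Defs
begin

text \<open>
A finite union A of closed intervals admits a finite set of breakpoints off which it is locally
constant, so its sets of left and right endpoints l(A) and r(A) are finite. A is recovered from
them: a point lies in A iff it is an endpoint, or its predecessor among the endpoints is a left
endpoint but not a right one. Conversely this reconstruction turns every pair of finite sets into
a finite union of closed intervals, so the co-ordinate pairs (l(A), r(A)) are exactly the pairs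
(L, R) of finite sets whose reconstruction has endpoints L and R.

Membership in the reconstruction is first-order expressible in W(I), because ips computes
predecessors. This defines the domain, and union and intersection pointwise; the minimum, the
maximum and the endpoint sets of A are finite, hence their own co-ordinates, and are given by
W(I)-terms in l(A) and r(A).
\<close>

lemma prev_in_finite:
  fixes E :: "'a::linorder set"
  assumes "finite E" "e0 \<in> E" "e0 < x"
  obtains e where "e \<in> E" "e < x" "{e<..<x} \<inter> E = {}"
proof
  let ?e = "Max {e \<in> E. e < x}"
  have "?e \<in> {e \<in> E. e < x}" using assms by (intro Max_in) auto
  then show "?e \<in> E" "?e < x" by auto
  have "y \<le> ?e" if "y \<in> E" "y < x" for y using assms(1) that by (intro Max_ge) auto
  then show "{?e<..<x} \<inter> E = {}" by fastforce
qed

lemma next_in_finite: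
  fixes E :: "'a::linorder set"
  assumes "finite E" "e0 \<in> E" "x < e0"
  obtains e where "e \<in> E" "x < e" "{x<..<e} \<inter> E = {}"
proof
  let ?e = "Min {e \<in> E. x < e}"
  have "?e \<in> {e \<in> E. x < e}" using assms by (intro Min_in) auto
  then show "?e \<in> E" "x < ?e" by auto
  have "?e \<le> y" if "y \<in> E" "x < y" for y using assms(1) that by (intro Min_le) auto
  then show "{x<..<?e} \<inter> E = {}" by fastforce
qed

lemma gap_around:
  fixes E :: "'a::linorder set"
  assumes "finite E" "x \<notin> E" "a0 < x" "x < b0"
  obtains a b where "a < x" "x < b" "{a<..<b} \<inter> E = {}"
proof -
  obtain a where a: "a < x" "{a<..<x} \<inter> insert a0 E = {}"
    using prev_in_finite[of "insert a0 E" a0 x] assms by auto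
  obtain b where b: "x < b" "{x<..<b} \<inter> insert b0 E = {}"
    using next_in_finite[of "insert b0 E" b0 x] assms by auto
  have "y \<notin> E" if "a < y" "y < b" for y
    using that a(2) b(2) assms(2) by (cases y x rule: linorder_cases) auto
  then have "{a<..<b} \<inter> E = {}" by auto
  then show thesis using that a(1) b(1) by blast
qed

lemma atLeastAtMost_subset_join:
  fixes a b c :: "'a::linorder"
  assumes "{a..b} \<subseteq> A" "{b..c} \<subseteq> A"
  shows "{a..c} \<subseteq> A"
proof
  fix x assume "x \<in> {a..c}"
  then show "x \<in> A" using assms by (cases "x \<le> b") auto
qed

section \<open>Breakpoints\<close>

definition breakpoints :: "'a::linorder set \<Rightarrow> 'a set \<Rightarrow> bool" where
  "breakpoints E A \<longleftrightarrow>
     (\<forall>a b. a < b \<longrightarrow> {a<..<b} \<inter> E = {} \<longrightarrow> {a..b} \<subseteq> A \<or> {a<..<b} \<inter> A = {})"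

lemma breakpoints_mono: "breakpoints E A \<Longrightarrow> E \<subseteq> E' \<Longrightarrow> breakpoints E' A"
  unfolding breakpoints_def by blast

lemma breakpoints_Union: "(\<And>S. S \<in> F \<Longrightarrow> breakpoints E S) \<Longrightarrow> breakpoints E (\<Union>F)"
  unfolding breakpoints_def by blast

lemma breakpoints_atLeastAtMost: "breakpoints {i, j} {i..j}"
  unfolding breakpoints_def by (auto simp: subset_eq)

lemma breakpoints_atLeast: "breakpoints {i} {i..}"
  unfolding breakpoints_def by (auto simp: subset_eq)

lemma breakpoints_atMost: "breakpoints {j} {..j}"
  unfolding breakpoints_def by (auto simp: subset_eq)

lemma breakpoints_closed_interval:
  assumes "closed_interval S"
  obtains E where "finite E" "breakpoints E S"
  using assms breakpoints_atLeastAtMost breakpoints_atLeast breakpoints_atMost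
  unfolding closed_interval_def by (metis finite.emptyI finite.insertI)

lemma Lset_breakpoints:
  fixes A :: "'a::{linorder,order_bot} set"
  assumes "Lset A"
  obtains E where "finite E" "bot \<in> E" "breakpoints E A"
proof -
  obtain F where F: "finite F" "\<forall>S\<in>F. closed_interval S" "A = \<Union>F"
    using assms unfolding Lset_def by blast
  then obtain EF where EF: "\<And>S. S \<in> F \<Longrightarrow> finite (EF S) \<and> breakpoints (EF S) S"
    using breakpoints_closed_interval by metis
  let ?E = "insert bot (\<Union>(EF ` F))"
  have "breakpoints ?E A"
    unfolding F(3) by (rule breakpoints_Union) (use EF breakpoints_mono in blast)
  moreover have "finite ?E" using F(1) EF by blast
  ultimately show thesis using that by blast
qed

lemma breakpoints_fill_gap:
  assumes "breakpoints E A" "{a<..<b} \<inter> E = {}" "x \<in> A" "a < x" "x < b"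
  shows "{a..b} \<subseteq> A"
proof -
  have "a < b" "x \<in> {a<..<b} \<inter> A" using assms(3-5) by auto
  then show ?thesis using assms(1,2) unfolding breakpoints_def by blast
qed

section \<open>Endpoints of a finite union of closed intervals\<close>

lemma lend_subset: "lend A \<subseteq> A"
  unfolding lend_def by auto

lemma rend_subset: "rend A \<subseteq> A"
  unfolding rend_def by auto

lemma lend_notin_block:
  fixes A :: "'a::{dense_linorder,order_bot} set"
  assumes "{a..b} \<subseteq> A" "a < u" "u \<le> b"
  shows "u \<notin> lend A"
proof
  assume "u \<in> lend A"
  moreover have "u \<noteq> bot" using order.strict_trans1[OF bot_least assms(2)] by simp
  ultimately obtain j where j: "j < u" "{j<..<u} \<inter> A = {}" unfolding lend_def by auto
  obtain c where "max j a < c" "c < u" using assms(2) j(1) dense by (metis max_less_iff_conj)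
  then have "c \<in> {a..b}" "c \<in> {j<..<u}" using assms(3) by auto
  then have "c \<in> A" "c \<in> {j<..<u}" using assms(1) by blast+
  then show False using j(2) by blast
qed

lemma rend_notin_block:
  fixes A :: "'a::dense_linorder set"
  assumes "{a..b} \<subseteq> A" "a \<le> u" "u < b"
  shows "u \<notin> rend A"
proof
  assume "u \<in> rend A"
  then obtain j where j: "u < j" "{u<..<j} \<inter> A = {}" unfolding rend_def by auto
  obtain c where "u < c" "c < min j b" using assms(3) j(1) dense by (metis min_less_iff_conj)
  then have "c \<in> {a..b}" "c \<in> {u<..<j}" using assms(2) by auto
  then have "c \<in> A" "c \<in> {u<..<j}" using assms(1) by blast+
  then show False using j(2) by blast
qed

lemma ends_subset_breakpoints:
  fixes A :: "'a::{dense_linorder,no_top,order_bot} set"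
  assumes "finite E" "bot \<in> E" "breakpoints E A"
  shows "lend A \<union> rend A \<subseteq> E"
proof
  fix i assume i: "i \<in> lend A \<union> rend A"
  show "i \<in> E"
  proof (rule ccontr)
    assume "i \<notin> E"
    then have "i \<noteq> bot" using assms(2) by blast
    then have "bot < i" by (simp add: bot.not_eq_extremum)
    obtain b0 where "i < b0" using gt_ex by blast
    obtain a b where ab: "a < i" "i < b" "{a<..<b} \<inter> E = {}"
      using gap_around[OF assms(1) \<open>i \<notin> E\<close> \<open>bot < i\<close> \<open>i < b0\<close>] by blast
    have "i \<in> A" using i lend_subset rend_subset by blast
    then have "{a..b} \<subseteq> A" using breakpoints_fill_gap[OF assms(3) ab(3)] ab(1,2) by blast
    then have "i \<notin> lend A" "i \<notin> rend A"
      using lend_notin_block[of a b A i] rend_notin_block[of a b A i] ab(1,2) by auto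
    then show False using i by blast
  qed
qed

lemma finite_lend_rend:
  fixes A :: "'a::{dense_linorder,no_top,order_bot} set"
  assumes "Lset A"
  shows "finite (lend A)" "finite (rend A)"
proof -
  obtain E where "finite E" "bot \<in> E" "breakpoints E A" using Lset_breakpoints[OF assms] .
  then have "finite (lend A \<union> rend A)" using ends_subset_breakpoints finite_subset by metis
  then show "finite (lend A)" "finite (rend A)" by simp_all
qed

lemma left_end_below:
  fixes A :: "'a::{linorder,order_bot} set"
  assumes "finite E" "bot \<in> E" "breakpoints E A" "x \<in> A"
  obtains l where "l \<in> lend A" "l \<le> x" "{l..x} \<subseteq> A"
proof -
  define C where "C = {y \<in> insert x E. y \<le> x \<and> {y..x} \<subseteq> A}"
  define l where "l = Min C"
  have "finite C" "x \<in> C" using assms(1,4) unfolding C_def by auto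
  then have "l \<in> C" and l_min: "\<And>y. y \<in> C \<Longrightarrow> l \<le> y"
    unfolding l_def using Min_in by auto
  then have l: "l \<le> x" "{l..x} \<subseteq> A" unfolding C_def by auto
  have "l \<in> lend A"
  proof (cases "l = bot")
    case True
    then show ?thesis using l unfolding lend_def by auto
  next
    case False
    then have "bot < l" by (simp add: bot.not_eq_extremum)
    then obtain e where e: "e \<in> E" "e < l" "{e<..<l} \<inter> E = {}"
      using prev_in_finite[OF assms(1,2)] by blast
    then consider "{e..l} \<subseteq> A" | "{e<..<l} \<inter> A = {}"
      using assms(3) unfolding breakpoints_def by blast
    then show ?thesis
    proof cases
      case 1
      from 1 l(2) have "{e..x} \<subseteq> A" by (rule atLeastAtMost_subset_join)
      then have "e \<in> C" using e l unfolding C_def by auto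
      then show ?thesis using l_min e(2) by fastforce
    next
      case 2
      then show ?thesis using e(2) l unfolding lend_def by auto
    qed
  qed
  then show thesis using that l by blast
qed

lemma block_or_right_end:
  fixes A :: "'a::linorder set"
  assumes "finite E" "breakpoints E A" "p \<in> A" "p < x"
  shows "{p..x} \<subseteq> A \<or> (\<exists>r\<in>rend A. p \<le> r \<and> r < x)"
proof -
  define C where "C = {y \<in> insert p (insert x E). p \<le> y \<and> y \<le> x \<and> {p..y} \<subseteq> A}"
  define r where "r = Max C"
  have "finite C" "p \<in> C" using assms unfolding C_def by auto
  then have "r \<in> C" and r_max: "\<And>y. y \<in> C \<Longrightarrow> y \<le> r"
    unfolding r_def using Max_in by auto
  then have r: "p \<le> r" "r \<le> x" "{p..r} \<subseteq> A" unfolding C_def by auto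
  show ?thesis
  proof (cases "r = x")
    case True
    then show ?thesis using r by auto
  next
    case False
    then have "r < x" using r(2) by simp
    then obtain e where e: "e \<in> insert x E" "r < e" "{r<..<e} \<inter> insert x E = {}"
      using next_in_finite[OF finite.insertI[OF assms(1)] insertI1] by blast
    have "e \<le> x"
    proof (rule ccontr)
      assume "\<not> e \<le> x"
      then have "x \<in> {r<..<e}" using \<open>r < x\<close> by auto
      then show False using e(3) by blast
    qed
    have "{r<..<e} \<inter> E = {}" using e(3) by blast
    then consider "{r..e} \<subseteq> A" | "{r<..<e} \<inter> A = {}"
      using assms(2) e(2) unfolding breakpoints_def by blast
    then show ?thesis
    proof cases
      case 1
      from r(3) 1 have "{p..e} \<subseteq> A" by (rule atLeastAtMost_subset_join)
      then have "e \<in> C" using e r \<open>e \<le> x\<close> unfolding C_def by auto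
      then show ?thesis using r_max e(2) by fastforce
    next
      case 2
      then have "r \<in> rend A" using e(2) r unfolding rend_def by auto
      then show ?thesis using r False by auto
    qed
  qed
qed

lemma lend_finite:
  fixes F :: "'a::{linorder,order_bot} set"
  assumes "finite F"
  shows "lend F = F"
proof (rule antisym[OF lend_subset subsetI])
  fix i assume "i \<in> F"
  show "i \<in> lend F"
  proof (cases "i = bot")
    case False
    then have "bot < i" by (simp add: bot.not_eq_extremum)
    then obtain j where "j < i" "{j<..<i} \<inter> insert bot F = {}"
      using prev_in_finite[of "insert bot F" bot i] assms by blast
    then show ?thesis using \<open>i \<in> F\<close> unfolding lend_def by blast
  qed (use \<open>i \<in> F\<close> in \<open>auto simp: lend_def\<close>)
qed

lemma rend_finite:
  fixes F :: "'a::{linorder,no_top} set"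
  assumes "finite F"
  shows "rend F = F"
proof (rule antisym[OF rend_subset subsetI])
  fix i assume "i \<in> F"
  obtain b where "i < b" using gt_ex by blast
  then obtain j where "i < j" "{i<..<j} \<inter> insert b F = {}"
    using next_in_finite[of "insert b F" b i] assms by blast
  then show "i \<in> rend F" using \<open>i \<in> F\<close> unfolding rend_def by blast
qed

section \<open>Recovering a set from its endpoints\<close>

definition set_of_ends :: "'a::linorder set \<Rightarrow> 'a set \<Rightarrow> 'a set" where
  "set_of_ends L R =
     {x. x \<in> L \<union> R \<or> (\<exists>p\<in>L - R. p < x \<and> {p<..<x} \<inter> (L \<union> R) = {})}"

lemma set_of_ends_lend_rend:
  fixes A :: "'a::{dense_linorder,no_top,order_bot} set"
  assumes "Lset A"
  shows "set_of_ends (lend A) (rend A) = A"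
proof -
  obtain E where E: "finite E" "bot \<in> E" "breakpoints E A" using Lset_breakpoints[OF assms] .
  have "x \<in> A" if x: "x \<in> set_of_ends (lend A) (rend A)" for x
  proof (cases "x \<in> lend A \<union> rend A")
    case True
    then show ?thesis using lend_subset rend_subset by blast
  next
    case False
    then obtain p where p: "p \<in> lend A" "p \<notin> rend A" "p < x"
      and gap: "{p<..<x} \<inter> (lend A \<union> rend A) = {}"
      using x unfolding set_of_ends_def by blast
    have "p \<in> A" using p(1) lend_subset by blast
    then consider "{p..x} \<subseteq> A" | r where "r \<in> rend A" "p \<le> r" "r < x"
      using block_or_right_end[OF E(1,3) _ p(3)] by blast
    then show ?thesis
    proof cases
      case 1
      then show ?thesis using p(3) by auto
    next
      case 2
      then have "r \<in> {p<..<x}" using p(2) by (auto simp: order.order_iff_strict)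
      then show ?thesis using gap 2(1) by blast
    qed
  qed
  moreover have "x \<in> set_of_ends (lend A) (rend A)" if x: "x \<in> A" for x
  proof (cases "x \<in> lend A \<union> rend A")
    case True
    then show ?thesis unfolding set_of_ends_def by blast
  next
    case False
    obtain l where l: "l \<in> lend A" "l \<le> x" "{l..x} \<subseteq> A"
      using left_end_below[OF E x] .
    have "l < x" using l(1,2) False by (auto simp: order.order_iff_strict)
    have "l \<notin> rend A" using rend_notin_block[OF l(3) order.refl \<open>l < x\<close>] .
    moreover have "{l<..<x} \<inter> (lend A \<union> rend A) = {}"
      using lend_notin_block[OF l(3)] rend_notin_block[OF l(3)] by fastforce
    ultimately show ?thesis using l(1) \<open>l < x\<close> unfolding set_of_ends_def by blast
  qed
  ultimately show ?thesis by blast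
qed

lemma closed_interval_up_to_next:
  fixes U :: "'a::linorder set"
  assumes "finite U"
  shows "closed_interval {x. p \<le> x \<and> {p<..<x} \<inter> U = {}}"
proof (cases "\<exists>u\<in>U. p < u")
  case True
  let ?s = "Min {u \<in> U. p < u}"
  have "?s \<in> {u \<in> U. p < u}" using assms True by (intro Min_in) auto
  then have s: "?s \<in> U" "p < ?s" by auto
  have s_min: "?s \<le> u" if "u \<in> U" "p < u" for u using assms that by (intro Min_le) auto
  have "{x. p \<le> x \<and> {p<..<x} \<inter> U = {}} = {p..?s}"
  proof (intro set_eqI iffI)
    fix x assume "x \<in> {x. p \<le> x \<and> {p<..<x} \<inter> U = {}}"
    then show "x \<in> {p..?s}" using s by (auto simp: not_le)
  next
    fix x assume "x \<in> {p..?s}"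
    then show "x \<in> {x. p \<le> x \<and> {p<..<x} \<inter> U = {}}" using s_min by fastforce
  qed
  then show ?thesis unfolding closed_interval_def by blast
next
  case False
  then have "{x. p \<le> x \<and> {p<..<x} \<inter> U = {}} = {p..}" by auto
  then show ?thesis unfolding closed_interval_def by blast
qed

lemma set_of_ends_eq_Union:
  "set_of_ends L R =
     (\<Union>u\<in>L \<union> R. {u..u}) \<union> (\<Union>p\<in>L - R. {x. p \<le> x \<and> {p<..<x} \<inter> (L \<union> R) = {}})"
  unfolding set_of_ends_def by (auto simp: order.order_iff_strict)

lemma Lset_UN:
  assumes "finite P" "\<And>p. p \<in> P \<Longrightarrow> closed_interval (S p)"
  shows "Lset (\<Union>p\<in>P. S p)"
  unfolding Lset_def using assms by blast

lemma Lset_Un: "Lset A \<Longrightarrow> Lset B \<Longrightarrow> Lset (A \<union> B)"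
  unfolding Lset_def by (metis Union_Un_distrib Un_iff finite_UnI)

lemma Lset_set_of_ends:
  fixes L R :: "'a::linorder set"
  assumes "finite L" "finite R"
  shows "Lset (set_of_ends L R)"
proof -
  have "closed_interval {u..u}" for u :: 'a unfolding closed_interval_def by blast
  then show ?thesis
    unfolding set_of_ends_eq_Union using assms
    by (intro Lset_Un Lset_UN closed_interval_up_to_next) auto
qed

lemma closed_interval_Int:
  fixes S T :: "'a::linorder set"
  assumes "closed_interval S" "closed_interval T"
  shows "closed_interval (S \<inter> T)"
proof -
  have "{i..} \<inter> {k..} = {max i k..}" "{i..} \<inter> {..l} = {i..l}" "{..l} \<inter> {i..} = {i..l}"
    "{..j} \<inter> {..l} = {..min j l}" for i j k l :: 'a by auto
  then show ?thesis using assms unfolding closed_interval_def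
    by (elim disjE exE) (simp_all add: Int_atLeastAtMost, blast+)
qed

lemma Lset_Int:
  fixes A B :: "'a::linorder set"
  assumes "Lset A" "Lset B"
  shows "Lset (A \<inter> B)"
proof -
  obtain F G where F: "finite F" "\<forall>S\<in>F. closed_interval S" "A = \<Union>F"
    and G: "finite G" "\<forall>T\<in>G. closed_interval T" "B = \<Union>G"
    using assms unfolding Lset_def by blast
  have "A \<inter> B = (\<Union>(S, T)\<in>F \<times> G. S \<inter> T)" using F(3) G(3) by auto
  also have "Lset \<dots>" using F G by (intro Lset_UN) (auto intro: closed_interval_Int)
  finally show ?thesis .
qed

definition ends_pair :: "'a::{linorder,order_bot} set \<Rightarrow> 'a set \<Rightarrow> bool" where
  "ends_pair L R \<longleftrightarrow> lend (set_of_ends L R) = L \<and> rend (set_of_ends L R) = R"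

lemma Lset_lend_rend_iff:
  fixes L R :: "'a::{dense_linorder,no_top,order_bot} set"
  assumes "finite L" "finite R"
  shows "Lset A \<and> lend A = L \<and> rend A = R \<longleftrightarrow> ends_pair L R \<and> A = set_of_ends L R"
  using set_of_ends_lend_rend Lset_set_of_ends[OF assms] unfolding ends_pair_def by metis

lemma ex_Lset_lend_rend_iff:
  fixes L R :: "'a::{dense_linorder,no_top,order_bot} set"
  assumes "finite L" "finite R"
  shows "(\<exists>A. Lset A \<and> lend A = L \<and> rend A = R) \<longleftrightarrow> ends_pair L R"
  using Lset_lend_rend_iff[OF assms] by blast

lemma ex_Lset_lend_rend_conj_iff:
  fixes L R :: "'a::{dense_linorder,no_top,order_bot} set"
  assumes "finite L" "finite R"
  shows "(\<exists>A. Lset A \<and> lend A = L \<and> rend A = R \<and> Q A) \<longleftrightarrow> ends_pair L R \<and> Q (set_of_ends L R)"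
proof
  assume "\<exists>A. Lset A \<and> lend A = L \<and> rend A = R \<and> Q A"
  then obtain A where A: "Lset A" "lend A = L" "rend A = R" "Q A" by blast
  then have "ends_pair L R \<and> A = set_of_ends L R" using Lset_lend_rend_iff[OF assms, of A] by simp
  then show "ends_pair L R \<and> Q (set_of_ends L R)" using A(4) by simp
next
  assume h: "ends_pair L R \<and> Q (set_of_ends L R)"
  then have "Lset (set_of_ends L R) \<and> lend (set_of_ends L R) = L \<and> rend (set_of_ends L R) = R"
    using Lset_lend_rend_iff[OF assms, of "set_of_ends L R"] by simp
  then show "\<exists>A. Lset A \<and> lend A = L \<and> rend A = R \<and> Q A" using h by blast
qed

lemma Lmin_eq:
  fixes A :: "'a::{dense_linorder,no_top,order_bot} set"
  assumes "Lset A"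
  shows "Lmin A = Wmin (lend A)"
proof (cases "A = {}")
  case True
  then show ?thesis using lend_subset[of A] unfolding Lmin_def Wmin_def by auto
next
  case False
  obtain E where E: "finite E" "bot \<in> E" "breakpoints E A" using Lset_breakpoints[OF assms] .
  have below: "\<exists>l\<in>lend A. l \<le> x" if "x \<in> A" for x
    using left_end_below[OF E that] by blast
  then have "lend A \<noteq> {}" using False by blast
  let ?m = "Min (lend A)"
  have "?m \<in> A" using Min_in[OF finite_lend_rend(1)[OF assms] \<open>lend A \<noteq> {}\<close>] lend_subset by blast
  moreover have "?m \<le> x" if "x \<in> A" for x
    using below[OF that] finite_lend_rend(1)[OF assms] by (meson Min_le order.trans)
  ultimately have "(LEAST x. x \<in> A) = ?m" by (intro Least_equality) auto
  then show ?thesis using False \<open>lend A \<noteq> {}\<close> unfolding Lmin_def Wmin_def by simp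
qed

lemma set_of_ends_above_Max:
  assumes "m \<in> L \<union> R" "\<forall>u\<in>L \<union> R. u \<le> m" "m < x"
  shows "x \<in> set_of_ends L R \<longleftrightarrow> m \<in> L - R"
proof
  assume "x \<in> set_of_ends L R"
  then obtain p where p: "p \<in> L - R" "p < x" "{p<..<x} \<inter> (L \<union> R) = {}"
    using assms unfolding set_of_ends_def by (auto simp: not_le[symmetric])
  have "\<not> p < m" using p(3) assms(1,3) by auto
  then have "p = m" using p(1) assms(2) by (auto intro: order.antisym simp: not_less)
  then show "m \<in> L - R" using p(1) by simp
next
  assume "m \<in> L - R"
  moreover have "{m<..<x} \<inter> (L \<union> R) = {}" using assms(2) by (auto simp: not_le[symmetric])
  ultimately show "x \<in> set_of_ends L R" using assms(3) unfolding set_of_ends_def by blast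
qed

text \<open>A has a greatest element iff its largest endpoint is a right endpoint; otherwise it is
  unbounded above.\<close>

lemma Lmax_eq:
  fixes A :: "'a::{dense_linorder,no_top,order_bot} set"
  assumes "Lset A"
  shows "Lmax A = Wmax (lend A \<union> rend A) \<inter> rend A"
proof (cases "A = {}")
  case True
  then show ?thesis using lend_subset[of A] rend_subset[of A] unfolding Lmax_def Wmax_def by auto
next
  case False
  let ?U = "lend A \<union> rend A"
  have fin: "finite ?U" using finite_lend_rend[OF assms] by blast
  have A_eq: "A = set_of_ends (lend A) (rend A)" using set_of_ends_lend_rend[OF assms] by simp
  then have "?U \<noteq> {}" using False unfolding set_of_ends_def by blast
  let ?m = "Max ?U"
  have m: "?m \<in> ?U" "\<forall>u\<in>?U. u \<le> ?m" using Max_in[OF fin \<open>?U \<noteq> {}\<close>] fin by auto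
  have above: "x \<in> A \<longleftrightarrow> ?m \<in> lend A - rend A" if "?m < x" for x
    using set_of_ends_above_Max[OF m that] A_eq by simp
  have W: "Wmax ?U = {?m}" using \<open>?U \<noteq> {}\<close> unfolding Wmax_def by simp
  show ?thesis
  proof (cases "?m \<in> rend A")
    case True
    have "x \<le> ?m" if "x \<in> A" for x
    proof (rule ccontr)
      assume "\<not> x \<le> ?m"
      then show False using above[of x] that True by (simp add: not_le)
    qed
    moreover have "?m \<in> A" using m(1) lend_subset rend_subset by blast
    ultimately have "bdd_above A" "(GREATEST x. x \<in> A) = ?m"
      by (auto simp: bdd_above_def intro: Greatest_equality)
    then show ?thesis using W True False unfolding Lmax_def by auto
  next
    case False
    have "\<not> bdd_above A"
    proof
      assume "bdd_above A"
      then obtain M where M: "\<And>x. x \<in> A \<Longrightarrow> x \<le> M" unfolding bdd_above_def by blast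
      obtain x where x: "max M ?m < x" using gt_ex by blast
      then have "x \<in> A" using above False m(1) by simp
      then show False using M x by fastforce
    qed
    then show ?thesis using W False unfolding Lmax_def by auto
  qed
qed

section \<open>Derived formulas of W(I)\<close>

definition WDisj :: "wform \<Rightarrow> wform \<Rightarrow> wform" where
  "WDisj \<phi> \<psi> = WNeg (WConj (WNeg \<phi>) (WNeg \<psi>))"

definition WImp :: "wform \<Rightarrow> wform \<Rightarrow> wform" where
  "WImp \<phi> \<psi> = WNeg (WConj \<phi> (WNeg \<psi>))"

definition WIff :: "wform \<Rightarrow> wform \<Rightarrow> wform" where
  "WIff \<phi> \<psi> = WConj (WImp \<phi> \<psi>) (WImp \<psi> \<phi>)"

definition WSingleton :: "nat \<Rightarrow> wform" where
  "WSingleton v = WConj (WNeg (WEq (WVar v) WBot)) (WEq (WMin (WVar v)) (WVar v))"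

definition WAllPt :: "nat \<Rightarrow> wform \<Rightarrow> wform" where
  "WAllPt v \<phi> = WNeg (WEx v (WConj (WSingleton v) (WNeg \<phi>)))"

definition WExPt :: "nat \<Rightarrow> wform \<Rightarrow> wform" where
  "WExPt v \<phi> = WEx v (WConj (WSingleton v) \<phi>)"

definition WSubset :: "wterm \<Rightarrow> wterm \<Rightarrow> wform" where
  "WSubset s t = WEq (WInt s t) s"

definition WLess :: "wterm \<Rightarrow> wterm \<Rightarrow> wform" where
  "WLess s t = WConj (WNeg (WEq s t)) (WEq (WMin (WUn s t)) s)"

lemma wsat_WDisj [simp]: "wsat \<sigma> (WDisj \<phi> \<psi>) \<longleftrightarrow> wsat \<sigma> \<phi> \<or> wsat \<sigma> \<psi>"
  unfolding WDisj_def by simp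

lemma wsat_WImp [simp]: "wsat \<sigma> (WImp \<phi> \<psi>) \<longleftrightarrow> (wsat \<sigma> \<phi> \<longrightarrow> wsat \<sigma> \<psi>)"
  unfolding WImp_def by simp

lemma wsat_WIff [simp]: "wsat \<sigma> (WIff \<phi> \<psi>) \<longleftrightarrow> (wsat \<sigma> \<phi> \<longleftrightarrow> wsat \<sigma> \<psi>)"
  unfolding WIff_def by auto

lemma wsat_WSingleton: "wsat \<sigma> (WSingleton v) \<longleftrightarrow> (\<exists>a. \<sigma> v = {a})"
proof -
  have "\<sigma> v \<noteq> {} \<and> Wmin (\<sigma> v) = \<sigma> v \<longleftrightarrow> (\<exists>a. \<sigma> v = {a})"
  proof
    assume h: "\<sigma> v \<noteq> {} \<and> Wmin (\<sigma> v) = \<sigma> v"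
    then have "Wmin (\<sigma> v) = {Min (\<sigma> v)}" by (simp add: Wmin_def)
    then have "\<sigma> v = {Min (\<sigma> v)}" using h by metis
    then show "\<exists>a. \<sigma> v = {a}" ..
  next
    assume "\<exists>a. \<sigma> v = {a}"
    then obtain a where "\<sigma> v = {a}" ..
    then show "\<sigma> v \<noteq> {} \<and> Wmin (\<sigma> v) = \<sigma> v" by (simp add: Wmin_def)
  qed
  then show ?thesis unfolding WSingleton_def wsat.simps weval.simps .
qed

lemma wsat_WAllPt [simp]: "wsat \<sigma> (WAllPt v \<phi>) \<longleftrightarrow> (\<forall>a. wsat (\<sigma>(v := {a})) \<phi>)"
  unfolding WAllPt_def using wsat_WSingleton[of "\<sigma>(v := X)" v for X] by auto

lemma wsat_WExPt [simp]: "wsat \<sigma> (WExPt v \<phi>) \<longleftrightarrow> (\<exists>a. wsat (\<sigma>(v := {a})) \<phi>)"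
  unfolding WExPt_def using wsat_WSingleton[of "\<sigma>(v := X)" v for X] by auto

lemma wsat_WSubset [simp]: "wsat \<sigma> (WSubset s t) \<longleftrightarrow> weval \<sigma> s \<subseteq> weval \<sigma> t"
  unfolding WSubset_def by auto

lemma wsat_WLess [simp]:
  assumes "weval \<sigma> s = {a}" "weval \<sigma> t = {b}"
  shows "wsat \<sigma> (WLess s t) \<longleftrightarrow> a < b"
proof -
  have "Wmin {b, a} = {min a b}" unfolding Wmin_def by (simp add: min.commute)
  then show ?thesis using assms unfolding WLess_def by (auto simp: min_def)
qed

text \<open>\<open>ips (U \<union> {a}) {a}\<close> consists of the predecessor of \<open>a\<close> in \<open>U\<close>, if there is one.\<close>

definition WPred :: "wterm \<Rightarrow> wterm \<Rightarrow> wterm" where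
  "WPred x U = WIps (WUn U x) x"

lemma weval_WPred:
  fixes \<sigma> :: "nat \<Rightarrow> 'a::{linorder,order_bot} set"
  assumes "weval \<sigma> x = {a}"
  shows "weval \<sigma> (WPred x U) = {p \<in> weval \<sigma> U. p < a \<and> {p<..<a} \<inter> weval \<sigma> U = {}}"
proof -
  have "ips (weval \<sigma> U \<union> {a}) {a} =
      {p \<in> weval \<sigma> U. p < a \<and> (\<forall>k\<in>weval \<sigma> U. \<not> (p < k \<and> k < a))}"
    unfolding ips_def by (auto simp: not_less)
  then show ?thesis unfolding WPred_def using assms by auto
qed

definition WInEnds :: "wterm \<Rightarrow> wterm \<Rightarrow> wterm \<Rightarrow> wform" where
  "WInEnds x L R =
     WDisj (WSubset x (WUn L R))
       (WConj (WNeg (WEq (WInt (WPred x (WUn L R)) L) WBot))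
         (WEq (WInt (WPred x (WUn L R)) R) WBot))"

lemma wsat_WInEnds [simp]:
  fixes \<sigma> :: "nat \<Rightarrow> 'a::{linorder,order_bot} set"
  assumes "weval \<sigma> x = {a}"
  shows "wsat \<sigma> (WInEnds x L R) \<longleftrightarrow> a \<in> set_of_ends (weval \<sigma> L) (weval \<sigma> R)"
proof -
  let ?L = "weval \<sigma> L" and ?R = "weval \<sigma> R"
  let ?P = "{p \<in> ?L \<union> ?R. p < a \<and> {p<..<a} \<inter> (?L \<union> ?R) = {}}"
  have "wsat \<sigma> (WInEnds x L R) \<longleftrightarrow> a \<in> ?L \<union> ?R \<or> (?P \<inter> ?L \<noteq> {} \<and> ?P \<inter> ?R = {})"
    unfolding WInEnds_def using assms weval_WPred[OF assms, of "WUn L R"] by simp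
  moreover have "p = q" if "p \<in> ?P" "q \<in> ?P" for p q
    using that by (cases p q rule: linorder_cases) auto
  ultimately show ?thesis unfolding set_of_ends_def by blast
qed

text \<open>Variables 100, 101 and 102 are reserved for the points bound in the formulas below.\<close>

definition WGapFree :: "nat \<Rightarrow> nat \<Rightarrow> nat \<Rightarrow> nat \<Rightarrow> wform" where
  "WGapFree u w l r =
     WAllPt 102 (WImp (WConj (WLess (WVar u) (WVar 102)) (WLess (WVar 102) (WVar w)))
       (WNeg (WInEnds (WVar 102) (WVar l) (WVar r))))"

lemma wsat_WGapFree:
  fixes \<sigma> :: "nat \<Rightarrow> 'a::{linorder,order_bot} set"
  assumes "\<sigma> u = {a}" "\<sigma> w = {b}" "u < 102" "w < 102" "l < 102" "r < 102"
  shows "wsat \<sigma> (WGapFree u w l r) \<longleftrightarrow> {a<..<b} \<inter> set_of_ends (\<sigma> l) (\<sigma> r) = {}"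
  using assms unfolding WGapFree_def by auto

definition WIsLend :: "nat \<Rightarrow> nat \<Rightarrow> nat \<Rightarrow> wform" where
  "WIsLend v l r =
     WConj (WInEnds (WVar v) (WVar l) (WVar r))
       (WDisj (WEq (WVar v) WZero) (WExPt 101 (WConj (WLess (WVar 101) (WVar v)) (WGapFree 101 v l r))))"

definition WIsRend :: "nat \<Rightarrow> nat \<Rightarrow> nat \<Rightarrow> wform" where
  "WIsRend v l r =
     WConj (WInEnds (WVar v) (WVar l) (WVar r))
       (WExPt 101 (WConj (WLess (WVar v) (WVar 101)) (WGapFree v 101 l r)))"

lemma wsat_WIsLend:
  fixes \<sigma> :: "nat \<Rightarrow> 'a::{linorder,order_bot} set"
  assumes "\<sigma> v = {a}" "v < 101" "l < 101" "r < 101"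
  shows "wsat \<sigma> (WIsLend v l r) \<longleftrightarrow> a \<in> lend (set_of_ends (\<sigma> l) (\<sigma> r))"
  using assms unfolding WIsLend_def lend_def by (simp add: wsat_WGapFree)

lemma wsat_WIsRend:
  fixes \<sigma> :: "nat \<Rightarrow> 'a::{linorder,order_bot} set"
  assumes "\<sigma> v = {a}" "v < 101" "l < 101" "r < 101"
  shows "wsat \<sigma> (WIsRend v l r) \<longleftrightarrow> a \<in> rend (set_of_ends (\<sigma> l) (\<sigma> r))"
  using assms unfolding WIsRend_def rend_def by (simp add: wsat_WGapFree)

definition WEndsPair :: "nat \<Rightarrow> nat \<Rightarrow> wform" where
  "WEndsPair l r =
     WConj (WAllPt 100 (WIff (WSubset (WVar 100) (WVar l)) (WIsLend 100 l r)))
       (WAllPt 100 (WIff (WSubset (WVar 100) (WVar r)) (WIsRend 100 l r)))"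

lemma wsat_WEndsPair:
  fixes \<sigma> :: "nat \<Rightarrow> 'a::{linorder,order_bot} set"
  assumes "l < 100" "r < 100"
  shows "wsat \<sigma> (WEndsPair l r) \<longleftrightarrow> ends_pair (\<sigma> l) (\<sigma> r)"
proof -
  let ?S = "set_of_ends (\<sigma> l) (\<sigma> r)"
  have "wsat (\<sigma>(100 := {a})) (WIff (WSubset (WVar 100) (WVar l)) (WIsLend 100 l r)) \<longleftrightarrow>
      (a \<in> \<sigma> l \<longleftrightarrow> a \<in> lend ?S)"
    and "wsat (\<sigma>(100 := {a})) (WIff (WSubset (WVar 100) (WVar r)) (WIsRend 100 l r)) \<longleftrightarrow>
      (a \<in> \<sigma> r \<longleftrightarrow> a \<in> rend ?S)" for a
    using assms by (simp_all add: wsat_WIsLend wsat_WIsRend)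
  then have "wsat \<sigma> (WEndsPair l r) \<longleftrightarrow>
      (\<forall>a. a \<in> \<sigma> l \<longleftrightarrow> a \<in> lend ?S) \<and> (\<forall>a. a \<in> \<sigma> r \<longleftrightarrow> a \<in> rend ?S)"
    unfolding WEndsPair_def by (simp only: wsat.simps wsat_WAllPt)
  then show ?thesis unfolding ends_pair_def set_eq_iff by blast
qed

section \<open>Definability of the structure of L(I)\<close>

lemma W_definableI:
  assumes "R \<subseteq> {xs. length xs = n \<and> (\<forall>X\<in>set xs. finite X)}"
    and "\<And>\<sigma>. \<forall>i. finite (\<sigma> i) \<Longrightarrow> wsat \<sigma> \<phi> \<longleftrightarrow> map \<sigma> [0..<n] \<in> R"
  shows "W_definable n R"
  unfolding W_definable_def using assms by blast

lemma W_definable_Lset: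
  "W_definable 2 {[lend A, rend A] | A :: 'a::{dense_linorder,no_top,order_bot} set. Lset A}"
proof (rule W_definableI[where \<phi> = "WEndsPair 0 1"])
  show "{[lend A, rend A] | A :: 'a set. Lset A} \<subseteq> {xs. length xs = 2 \<and> (\<forall>X\<in>set xs. finite X)}"
    using finite_lend_rend by auto
  fix \<sigma> :: "nat \<Rightarrow> 'a set" assume "\<forall>i. finite (\<sigma> i)"
  have m: "map \<sigma> [0..<2] = [\<sigma> 0, \<sigma> 1]" by (simp add: upt_rec eval_nat_numeral)
  have "map \<sigma> [0..<2] \<in> {[lend A, rend A] | A. Lset A} \<longleftrightarrow>
      (\<exists>A. Lset A \<and> lend A = \<sigma> 0 \<and> rend A = \<sigma> 1)"
    unfolding m by auto
  also have "\<dots> \<longleftrightarrow> ends_pair (\<sigma> 0) (\<sigma> 1)"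
    using \<open>\<forall>i. finite (\<sigma> i)\<close> by (intro ex_Lset_lend_rend_iff) auto
  finally show "wsat \<sigma> (WEndsPair 0 1) \<longleftrightarrow> map \<sigma> [0..<2] \<in> {[lend A, rend A] | A. Lset A}"
    by (simp add: wsat_WEndsPair)
qed

lemma W_definable_Lset_eq:
  "W_definable (2*2)
     {[lend A, rend A] @ [lend B, rend B] | A B :: 'a::{dense_linorder,no_top,order_bot} set.
        Lset A \<and> Lset B \<and> A = B}"
proof (rule W_definableI[where
      \<phi> = "WConj (WEndsPair 0 1) (WConj (WEq (WVar 2) (WVar 0)) (WEq (WVar 3) (WVar 1)))"])
  show "{[lend A, rend A] @ [lend B, rend B] | A B :: 'a set. Lset A \<and> Lset B \<and> A = B}
      \<subseteq> {xs. length xs = 2*2 \<and> (\<forall>X\<in>set xs. finite X)}"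
    using finite_lend_rend by auto
  fix \<sigma> :: "nat \<Rightarrow> 'a set" assume fin: "\<forall>i. finite (\<sigma> i)"
  have m: "map \<sigma> [0..<2*2] = [\<sigma> 0, \<sigma> 1, \<sigma> 2, \<sigma> 3]" by (simp add: upt_rec eval_nat_numeral)
  have "map \<sigma> [0..<2*2] \<in> {[lend A, rend A] @ [lend B, rend B] | A B. Lset A \<and> Lset B \<and> A = B}
      \<longleftrightarrow> (\<exists>A. Lset A \<and> lend A = \<sigma> 0 \<and> rend A = \<sigma> 1 \<and> lend A = \<sigma> 2 \<and> rend A = \<sigma> 3)"
    unfolding m by auto
  also have "\<dots> \<longleftrightarrow> ends_pair (\<sigma> 0) (\<sigma> 1) \<and> \<sigma> 0 = \<sigma> 2 \<and> \<sigma> 1 = \<sigma> 3"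
    using fin by (subst ex_Lset_lend_rend_conj_iff) (auto simp: ends_pair_def)
  finally show "wsat \<sigma> (WConj (WEndsPair 0 1) (WConj (WEq (WVar 2) (WVar 0)) (WEq (WVar 3) (WVar 1))))
      \<longleftrightarrow> map \<sigma> [0..<2*2] \<in> {[lend A, rend A] @ [lend B, rend B] | A B. Lset A \<and> Lset B \<and> A = B}"
    by (auto simp: wsat_WEndsPair)
qed

lemma W_definable_pointwise_op:
  fixes f :: "'a::{dense_linorder,no_top,order_bot} set \<Rightarrow> 'a set \<Rightarrow> 'a set"
  assumes Lset_f: "\<And>A B. Lset A \<Longrightarrow> Lset B \<Longrightarrow> Lset (f A B)"
    and mem_f: "\<And>A B x. x \<in> f A B \<longleftrightarrow> P (x \<in> A) (x \<in> B)"
    and wsat_C: "\<And>(\<sigma> :: nat \<Rightarrow> 'a set) \<phi> \<psi>. wsat \<sigma> (C \<phi> \<psi>) \<longleftrightarrow> P (wsat \<sigma> \<phi>) (wsat \<sigma> \<psi>)"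
  shows "W_definable (3*2)
    {[lend A, rend A] @ [lend B, rend B] @ [lend (f A B), rend (f A B)] | A B. Lset A \<and> Lset B}"
proof (rule W_definableI[where \<phi> = "WConj (WEndsPair 0 1) (WConj (WEndsPair 2 3) (WConj (WEndsPair 4 5)
    (WAllPt 100 (WIff (WInEnds (WVar 100) (WVar 4) (WVar 5))
      (C (WInEnds (WVar 100) (WVar 0) (WVar 1)) (WInEnds (WVar 100) (WVar 2) (WVar 3)))))))"])
  show "{[lend A, rend A] @ [lend B, rend B] @ [lend (f A B), rend (f A B)] | A B. Lset A \<and> Lset B}
      \<subseteq> {xs. length xs = 3*2 \<and> (\<forall>X\<in>set xs. finite X)}"
    using finite_lend_rend Lset_f by fastforce
  fix \<sigma> :: "nat \<Rightarrow> 'a set" assume fin: "\<forall>i. finite (\<sigma> i)"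
  let ?A = "set_of_ends (\<sigma> 0) (\<sigma> 1)" and ?B = "set_of_ends (\<sigma> 2) (\<sigma> 3)"
    and ?C = "set_of_ends (\<sigma> 4) (\<sigma> 5)"
  have m: "map \<sigma> [0..<3*2] = [\<sigma> 0, \<sigma> 1, \<sigma> 2, \<sigma> 3, \<sigma> 4, \<sigma> 5]"
    by (simp add: upt_rec eval_nat_numeral)
  have "map \<sigma> [0..<3*2] \<in>
      {[lend A, rend A] @ [lend B, rend B] @ [lend (f A B), rend (f A B)] | A B. Lset A \<and> Lset B}
      \<longleftrightarrow> (\<exists>A. Lset A \<and> lend A = \<sigma> 0 \<and> rend A = \<sigma> 1 \<and>
        (\<exists>B. Lset B \<and> lend B = \<sigma> 2 \<and> rend B = \<sigma> 3 \<and> lend (f A B) = \<sigma> 4 \<and> rend (f A B) = \<sigma> 5))"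
    unfolding m by simp blast
  also have "\<dots> \<longleftrightarrow> ends_pair (\<sigma> 0) (\<sigma> 1) \<and> ends_pair (\<sigma> 2) (\<sigma> 3) \<and>
      lend (f ?A ?B) = \<sigma> 4 \<and> rend (f ?A ?B) = \<sigma> 5"
    using fin by (simp add: ex_Lset_lend_rend_conj_iff)
  also have "\<dots> \<longleftrightarrow> ends_pair (\<sigma> 0) (\<sigma> 1) \<and> ends_pair (\<sigma> 2) (\<sigma> 3) \<and>
      ends_pair (\<sigma> 4) (\<sigma> 5) \<and> f ?A ?B = ?C"
    using Lset_lend_rend_iff[of "\<sigma> 4" "\<sigma> 5" "f ?A ?B"] Lset_f[OF Lset_set_of_ends Lset_set_of_ends] fin
    unfolding m by auto
  also have "f ?A ?B = ?C \<longleftrightarrow> (\<forall>x. x \<in> ?C \<longleftrightarrow> P (x \<in> ?A) (x \<in> ?B))"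
    unfolding set_eq_iff mem_f by blast
  finally show "wsat \<sigma> (WConj (WEndsPair 0 1) (WConj (WEndsPair 2 3) (WConj (WEndsPair 4 5)
    (WAllPt 100 (WIff (WInEnds (WVar 100) (WVar 4) (WVar 5))
      (C (WInEnds (WVar 100) (WVar 0) (WVar 1)) (WInEnds (WVar 100) (WVar 2) (WVar 3))))))))
    \<longleftrightarrow> map \<sigma> [0..<3*2] \<in>
      {[lend A, rend A] @ [lend B, rend B] @ [lend (f A B), rend (f A B)] | A B. Lset A \<and> Lset B}"
    by (simp add: wsat_WEndsPair wsat_C)
qed

lemma W_definable_finite_valued_op:
  fixes f :: "'a::{dense_linorder,no_top,order_bot} set \<Rightarrow> 'a set"
  assumes finite_f: "\<And>A. Lset A \<Longrightarrow> finite (f A)"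
    and weval_t: "\<And>A \<sigma>. Lset A \<Longrightarrow> \<sigma> 0 = lend A \<Longrightarrow> \<sigma> 1 = rend A \<Longrightarrow> weval \<sigma> t = f A"
  shows "W_definable (2*2) {[lend A, rend A] @ [lend (f A), rend (f A)] | A. Lset A}"
proof (rule W_definableI[where \<phi> = "WConj (WEndsPair 0 1) (WConj (WEq (WVar 2) t) (WEq (WVar 3) t))"])
  show "{[lend A, rend A] @ [lend (f A), rend (f A)] | A. Lset A}
      \<subseteq> {xs. length xs = 2*2 \<and> (\<forall>X\<in>set xs. finite X)}"
  proof (intro subsetI, elim CollectE exE conjE)
    fix xs A assume "xs = [lend A, rend A] @ [lend (f A), rend (f A)]" and A: "Lset A"
    then show "xs \<in> {xs. length xs = 2*2 \<and> (\<forall>X\<in>set xs. finite X)}"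
      using finite_lend_rend[OF A] finite_f[OF A] lend_finite[OF finite_f[OF A]] rend_finite[OF finite_f[OF A]]
      by simp
  qed
  fix \<sigma> :: "nat \<Rightarrow> 'a set" assume fin: "\<forall>i. finite (\<sigma> i)"
  let ?A = "set_of_ends (\<sigma> 0) (\<sigma> 1)"
  have m: "map \<sigma> [0..<2*2] = [\<sigma> 0, \<sigma> 1, \<sigma> 2, \<sigma> 3]" by (simp add: upt_rec eval_nat_numeral)
  have "map \<sigma> [0..<2*2] \<in> {[lend A, rend A] @ [lend (f A), rend (f A)] | A. Lset A}
      \<longleftrightarrow> (\<exists>A. Lset A \<and> lend A = \<sigma> 0 \<and> rend A = \<sigma> 1 \<and> lend (f A) = \<sigma> 2 \<and> rend (f A) = \<sigma> 3)"
    unfolding m by simp blast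
  also have "\<dots> \<longleftrightarrow> ends_pair (\<sigma> 0) (\<sigma> 1) \<and> lend (f ?A) = \<sigma> 2 \<and> rend (f ?A) = \<sigma> 3"
    using fin by (simp add: ex_Lset_lend_rend_conj_iff)
  also have "\<dots> \<longleftrightarrow> ends_pair (\<sigma> 0) (\<sigma> 1) \<and> \<sigma> 2 = weval \<sigma> t \<and> \<sigma> 3 = weval \<sigma> t"
  proof (cases "ends_pair (\<sigma> 0) (\<sigma> 1)")
    case True
    then have A: "Lset ?A" "\<sigma> 0 = lend ?A" "\<sigma> 1 = rend ?A"
      using Lset_set_of_ends fin unfolding ends_pair_def by auto
    have "finite (f ?A)" using finite_f[OF A(1)] .
    then have "lend (f ?A) = f ?A" "rend (f ?A) = f ?A" by (rule lend_finite, rule rend_finite)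
    moreover have "weval \<sigma> t = f ?A" using weval_t[OF A] .
    ultimately show ?thesis using True by auto
  qed simp
  finally show "wsat \<sigma> (WConj (WEndsPair 0 1) (WConj (WEq (WVar 2) t) (WEq (WVar 3) t)))
      \<longleftrightarrow> map \<sigma> [0..<2*2] \<in> {[lend A, rend A] @ [lend (f A), rend (f A)] | A. Lset A}"
    by (simp add: wsat_WEndsPair)
qed

lemma W_definable_finite_constant:
  fixes C :: "'a::{linorder,no_top,order_bot} set"
  assumes "finite C" "\<And>\<sigma>. weval \<sigma> t = C"
  shows "W_definable 2 {[lend C, rend C]}"
proof -
  have ends: "lend C = C" "rend C = C" using assms(1) lend_finite rend_finite by auto
  show ?thesis
  proof (rule W_definableI[where \<phi> = "WConj (WEq (WVar 0) t) (WEq (WVar 1) t)"])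
    show "{[lend C, rend C]} \<subseteq> {xs. length xs = 2 \<and> (\<forall>X\<in>set xs. finite X)}"
      using ends assms(1) by simp
    show "wsat \<sigma> (WConj (WEq (WVar 0) t) (WEq (WVar 1) t)) \<longleftrightarrow> map \<sigma> [0..<2] \<in> {[lend C, rend C]}"
      for \<sigma> :: "nat \<Rightarrow> 'a set"
      using ends assms(2) by (simp add: upt_rec)
  qed
qed

lemma W_definable_Un:
  "W_definable (3*2)
     {[lend A, rend A] @ [lend B, rend B] @ [lend (A \<union> B), rend (A \<union> B)]
       | A B :: 'a::{dense_linorder,no_top,order_bot} set. Lset A \<and> Lset B}"
  by (rule W_definable_pointwise_op[where P = "(\<or>)" and C = WDisj]) (auto intro: Lset_Un)

lemma W_definable_Int:
  "W_definable (3*2)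
     {[lend A, rend A] @ [lend B, rend B] @ [lend (A \<inter> B), rend (A \<inter> B)]
       | A B :: 'a::{dense_linorder,no_top,order_bot} set. Lset A \<and> Lset B}"
  by (rule W_definable_pointwise_op[where P = "(\<and>)" and C = WConj]) (auto intro: Lset_Int)

lemma W_definable_empty: "W_definable 2 {[lend ({} :: 'a::{linorder,no_top,order_bot} set), rend {}]}"
  by (rule W_definable_finite_constant[where t = WBot]) auto

lemma W_definable_bot: "W_definable 2 {[lend {bot :: 'a::{linorder,no_top,order_bot}}, rend {bot}]}"
  by (rule W_definable_finite_constant[where t = WZero]) auto

lemma W_definable_Lmin:
  "W_definable (2*2)
     {[lend A, rend A] @ [lend (Lmin A), rend (Lmin A)] | A :: 'a::{dense_linorder,no_top,order_bot} set. Lset A}"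
  by (rule W_definable_finite_valued_op[where t = "WMin (WVar 0)"]) (simp add: Lmin_def, simp add: Lmin_eq)

lemma W_definable_Lmax:
  "W_definable (2*2)
     {[lend A, rend A] @ [lend (Lmax A), rend (Lmax A)] | A :: 'a::{dense_linorder,no_top,order_bot} set. Lset A}"
  by (rule W_definable_finite_valued_op[where t = "WInt (WMax (WUn (WVar 0) (WVar 1))) (WVar 1)"])
    (simp add: Lmax_def, simp add: Lmax_eq)

lemma W_definable_lend:
  "W_definable (2*2)
     {[lend A, rend A] @ [lend (lend A), rend (lend A)] | A :: 'a::{dense_linorder,no_top,order_bot} set. Lset A}"
  by (rule W_definable_finite_valued_op[where t = "WVar 0"]) (auto simp: finite_lend_rend)

lemma W_definable_rend:
  "W_definable (2*2)
     {[lend A, rend A] @ [lend (rend A), rend (rend A)] | A :: 'a::{dense_linorder,no_top,order_bot} set. Lset A}"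
  by (rule W_definable_finite_valued_op[where t = "WVar 1"]) (auto simp: finite_lend_rend)

theorem theorem6p4:
  shows "interprets_L_in_W
           (\<lambda>A::'a::{dense_linorder, no_top, order_bot} set. [lend A, rend A]) 2"
  unfolding interprets_L_in_W_def
  by (intro conjI) (simp, (rule W_definable_Lset W_definable_Lset_eq W_definable_Un W_definable_Int
    W_definable_empty W_definable_bot W_definable_Lmin W_definable_Lmax W_definable_lend W_definable_rend)+)

end
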